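(* Let $X=\mathbb{CP}^2\#n\overline{\mathbb{CP}}^2$ and $k\ge1$. The set of minimal elements of $U_5=\{A\in H_2(X;\mathbb{Z}):\mathrm{ind}(A)\ge2k,\ A\cdot H>0\}$ with respect to the preorder $\ge$ is finite.
   Context: $K_0=-3H+E_1+\cdots+E_n$, $\mathrm{ind}(A):=A^2-K_0\cdot A$. With $H^2(X;\mathbb{R})\cong\mathbb{R}^{n+1}$ via $(x_0,\dots,x_n)\leftrightarrow x_0PD(H)-\sum x_iPD(E_i)$, the reduced cone $\mathcal{P}$ is: $0<x_1<x_0$ ($n=1$); $0<x_2\le x_1$, $x_1+x_2<x_0$ ($n=2$); $0<x_n\le\cdots\le x_1$, $x_1+x_2+x_3\le x_0$, $\sum x_i^2<x_0^2$ ($n\ge3$); $\mathcal{P}^{c_1>0}=\{[\omega]\in\mathcal{P}:\omega(3H-\sum E_i)>0\}$. For $A,B\in U_5$, $A\ge B$ means $\omega(A)\ge\omega(B)$ for all $[\omega]\in\mathcal{P}^{c_1>0}$; $A$ is minimal if no other $B\in U_5$ satisfies $A\ge B$. *)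

theory Defs
  imports Complex_Main
begin

text \<open>H_2(X;Z) = Z^(n+1) with basis H, E_1,...,E_n.
  A homology class A is represented by a function A :: nat => int with
  A = (A 0) H + sum_{i=1..n} (A i) E_i, and A i = 0 for i > n.\<close>

definition H2 :: "nat \<Rightarrow> (nat \<Rightarrow> int) set" where
  "H2 n = {A. \<forall>i>n. A i = 0}"

definition inter :: "nat \<Rightarrow> (nat \<Rightarrow> int) \<Rightarrow> (nat \<Rightarrow> int) \<Rightarrow> int" where
  "inter n A B = A 0 * B 0 - (\<Sum>i=1..n. A i * B i)"

definition Hcl :: "nat \<Rightarrow> int" where
  "Hcl = (\<lambda>j. if j = 0 then 1 else 0)"

definition Ecl :: "nat \<Rightarrow> nat \<Rightarrow> int" where
  "Ecl i = (\<lambda>j. if j = i then 1 else 0)"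

definition K0 :: "nat \<Rightarrow> nat \<Rightarrow> int" where
  "K0 n = (\<lambda>j. if j = 0 then -3 else if j \<le> n then 1 else 0)"

definition ind :: "nat \<Rightarrow> (nat \<Rightarrow> int) \<Rightarrow> int" where
  "ind n A = inter n A A - inter n (K0 n) A"

text \<open>Pairing of the cohomology class x_0 PD(H) - sum x_i PD(E_i) with A.\<close>
definition omega :: "nat \<Rightarrow> (nat \<Rightarrow> real) \<Rightarrow> (nat \<Rightarrow> int) \<Rightarrow> real" where
  "omega n x A = x 0 * of_int (inter n Hcl A) - (\<Sum>i=1..n. x i * of_int (inter n (Ecl i) A))"

definition reduced_cone :: "nat \<Rightarrow> (nat \<Rightarrow> real) set" where
  "reduced_cone n =
    (if n = 1 then {x. 0 < x 1 \<and> x 1 < x 0}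
     else if n = 2 then {x. 0 < x 2 \<and> x 2 \<le> x 1 \<and> x 1 + x 2 < x 0}
     else {x. 0 < x n \<and> (\<forall>i\<in>{1..<n}. x (i+1) \<le> x i) \<and> x 1 + x 2 + x 3 \<le> x 0
              \<and> (\<Sum>i=1..n. (x i)\<^sup>2) < (x 0)\<^sup>2})"

definition c1cl :: "nat \<Rightarrow> nat \<Rightarrow> int" where
  "c1cl n = (\<lambda>j. if j = 0 then 3 else if j \<le> n then -1 else 0)"

definition reduced_cone_c1pos :: "nat \<Rightarrow> (nat \<Rightarrow> real) set" where
  "reduced_cone_c1pos n = {x \<in> reduced_cone n. omega n x (c1cl n) > 0}"

definition U5 :: "nat \<Rightarrow> nat \<Rightarrow> (nat \<Rightarrow> int) set" where
  "U5 n k = {A \<in> H2 n. ind n A \<ge> 2 * int k \<and> inter n A Hcl > 0}"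

definition cls_ge :: "nat \<Rightarrow> (nat \<Rightarrow> int) \<Rightarrow> (nat \<Rightarrow> int) \<Rightarrow> bool" where
  "cls_ge n A B \<longleftrightarrow> (\<forall>x\<in>reduced_cone_c1pos n. omega n x A \<ge> omega n x B)"

definition minimal_U5 :: "nat \<Rightarrow> nat \<Rightarrow> (nat \<Rightarrow> int) set" where
  "minimal_U5 n k = {A \<in> U5 n k. \<not> (\<exists>B\<in>U5 n k. B \<noteq> A \<and> cls_ge n A B)}"

end

theory Submission
  imports Defs
begin

text \<open>
  Write a = A\<cdot>H and b_i = A\<cdot>E_i, so that A = aH - \<Sum>b_i E_i.  If A is minimal and v is a
  nonzero class with v\<cdot>H < a and nonnegative area on the whole cone, then A - v is a class below
  A with positive H-coefficient, so minimality forces ind(A - v) < 2k \<le> ind(A).  For v = E_j and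
  v = E_i - E_j this makes the b_i nonnegative and nonincreasing; for v = H - E_1 - E_2 - E_3 and
  v = c_1 = 3H - \<Sum>E_i it gives two inequalities which, together with
  ind(A) = a^2 + 3a - \<Sum>(b_i^2 + b_i) \<ge> 2k, bound a by a polynomial in n and k (separately for
  b_3 \<ge> 2 and b_3 \<le> 1).  Then ind(A) \<ge> 2k gives b_i < a + 2, so all minimal classes lie in a
  finite box.
\<close>

lemma inter_Hcl [simp]: "inter n B Hcl = B 0"
  by (simp add: inter_def Hcl_def)

lemma omega_eq_sum: "omega n x A = x 0 * of_int (A 0) + (\<Sum>i=1..n. x i * of_int (A i))"
proof -
  have E: "inter n (Ecl i) A = - A i" if "i \<in> {1..n}" for i
  proof -
    have "(\<Sum>j=1..n. Ecl i j * A j) = (\<Sum>j=1..n. if j = i then A j else 0)"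
      by (rule sum.cong) (auto simp: Ecl_def)
    then show ?thesis using that by (simp add: inter_def Ecl_def sum.delta)
  qed
  have "inter n Hcl A = A 0" by (simp add: inter_def Hcl_def)
  moreover have "(\<Sum>i=1..n. x i * of_int (inter n (Ecl i) A)) = (\<Sum>i=1..n. - (x i * of_int (A i)))"
    by (rule sum.cong) (auto simp: E)
  ultimately show ?thesis by (simp add: omega_def sum_negf)
qed

lemma omega_diff: "omega n x (\<lambda>t. A t - v t) = omega n x A - omega n x v"
  by (simp add: omega_eq_sum algebra_simps sum_subtractf)

lemma ind_eq_sum: "ind n A = (A 0)^2 + 3 * A 0 - (\<Sum>i=1..n. (A i)^2 - A i)"
proof -
  have "(\<Sum>i=1..n. K0 n i * A i) = (\<Sum>i=1..n. A i)"
    by (rule sum.cong) (auto simp: K0_def)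
  then show ?thesis by (simp add: ind_def inter_def K0_def power2_eq_square sum_subtractf)
qed

lemma ind_diff:
  "ind n (\<lambda>t. A t - v t) = ind n A - 2 * A 0 * v 0 + (v 0)^2 - 3 * v 0
     - (\<Sum>i=1..n. (v i)^2 + v i) + 2 * (\<Sum>i=1..n. A i * v i)"
proof -
  have "(A i - v i)^2 - (A i - v i) = ((A i)^2 - A i) + (((v i)^2 + v i) - 2 * (A i * v i))" for i
    by (simp add: power2_eq_square algebra_simps)
  then have "(\<Sum>i=1..n. (A i - v i)^2 - (A i - v i)) = (\<Sum>i=1..n. (A i)^2 - A i)
      + ((\<Sum>i=1..n. (v i)^2 + v i) - 2 * (\<Sum>i=1..n. A i * v i))"
    by (simp only: sum.distrib sum_subtractf sum_distrib_left)
  then show ?thesis by (simp add: ind_eq_sum power2_eq_square algebra_simps)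
qed

lemma sq_minus_self_nonneg: "0 \<le> (x::int)^2 - x"
proof -
  have "0 \<le> x * (x - 1)" by (cases "x \<le> 0") (auto simp: mult_nonpos_nonpos)
  then show ?thesis by (simp add: power2_eq_square algebra_simps)
qed

lemma reduced_cone_antimono:
  assumes x: "x \<in> reduced_cone n" and "1 \<le> i" "i \<le> j" "j \<le> n"
  shows "x j \<le> x i"
proof (cases "n \<ge> 3")
  case True
  then have step: "x (Suc m) \<le> x m" if "m \<in> {1..<n}" for m
    using x that by (simp add: reduced_cone_def)
  have "x (i + d) \<le> x i" if "i + d \<le> n" for d
    using that
  proof (induction d)
    case (Suc d)
    then have "x (Suc (i + d)) \<le> x (i + d)" using step \<open>1 \<le> i\<close> by simp
    with Suc show ?case by simp
  qed simp
  from this[of "j - i"] show ?thesis using assms by simp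
next
  case False
  then consider "i = j" | "n = 2" "i = 1" "j = 2" using assms by linarith
  then show ?thesis using x by cases (simp_all add: reduced_cone_def)
qed

lemma reduced_cone_pos:
  assumes x: "x \<in> reduced_cone n" and "1 \<le> j" "j \<le> n"
  shows "0 < x j"
proof -
  have "0 < x n" using x assms by (auto simp: reduced_cone_def split: if_splits)
  moreover have "x n \<le> x j" using reduced_cone_antimono[OF x] assms by simp
  ultimately show ?thesis by simp
qed

lemma sum_if_le_eq_sum_upto_min:
  fixes n m :: nat
  shows   "(\<Sum>t=1..n. if t \<le> m then f t else 0) = (\<Sum>t=1..min n m. f t)"
proof -
  have "(\<Sum>t=1..n. if t \<le> m then f t else 0) = (\<Sum>t\<in>{t\<in>{1..n}. t \<le> m}. f t)"
    by (rule sum.inter_filter[symmetric]) simp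
  also have "{t\<in>{1..n}. t \<le> m} = {1..min n m}" by auto
  finally show ?thesis .
qed

lemma sum_upto_min3_eq:
  fixes f :: "nat \<Rightarrow> 'a::comm_monoid_add"
  assumes "1 \<le> n" and "\<forall>t>n. f t = 0"
  shows "(\<Sum>t=1..min n 3. f t) = f 1 + f 2 + f 3"
proof -
  consider "n = 1" | "n = 2" | "3 \<le> n" using assms(1) by linarith
  then show ?thesis
    using assms(2) by cases (auto simp: min_def numeral_2_eq_2 numeral_3_eq_3)
qed

lemma reduced_cone_sum_first_three_le:
  assumes x: "x \<in> reduced_cone n" and "1 \<le> n"
  shows "(\<Sum>i=1..min n 3. x i) \<le> x 0"
proof -
  consider "n = 1" | "n = 2" | "3 \<le> n" using assms(2) by linarith
  then show ?thesis
    using x by cases (simp_all add: reduced_cone_def min_def numeral_2_eq_2 numeral_3_eq_3)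
qed

lemma minimal_U5_D:
  assumes "A \<in> minimal_U5 n k"
  shows "A \<in> H2 n" "0 < A 0" "2 * int k \<le> ind n A"
  using assms by (auto simp: minimal_U5_def U5_def)

lemma minimal_U5_ind_diff_less:
  assumes A: "A \<in> minimal_U5 n k" and v: "v \<in> H2 n" "v \<noteq> (\<lambda>_. 0)" "v 0 < A 0"
    and area: "\<forall>x\<in>reduced_cone_c1pos n. 0 \<le> omega n x v"
  shows "ind n (\<lambda>t. A t - v t) < 2 * int k"
proof (rule ccontr)
  assume "\<not> ind n (\<lambda>t. A t - v t) < 2 * int k"
  moreover have "A \<in> U5 n k" and no_smaller: "\<not> (\<exists>B\<in>U5 n k. B \<noteq> A \<and> cls_ge n A B)"
    using A by (auto simp: minimal_U5_def)
  ultimately have "(\<lambda>t. A t - v t) \<in> U5 n k"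
    using v by (auto simp: U5_def H2_def)
  moreover have "(\<lambda>t. A t - v t) \<noteq> A" using v(2) by (auto simp: fun_eq_iff)
  moreover have "cls_ge n A (\<lambda>t. A t - v t)" using area by (simp add: cls_ge_def omega_diff)
  ultimately show False using no_smaller by blast
qed

lemma minimal_U5_ind_diff_E:
  assumes A: "A \<in> minimal_U5 n k" and j: "1 \<le> j" "j \<le> n"
  shows "ind n A + 2 * A j - 2 < 2 * int k"
proof -
  have E_sums: "(\<Sum>i=1..n. (Ecl j i)^2 + Ecl j i) = 2" "(\<Sum>i=1..n. A i * Ecl j i) = A j"
    "(\<Sum>i=1..n. x i * of_int (Ecl j i)) = x j" for x :: "nat \<Rightarrow> real"
    using j by (simp_all add: Ecl_def if_distrib sum.delta cong: if_cong)
  have area: "omega n x (Ecl j) = x j" for x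
    using j E_sums(3) by (simp add: omega_eq_sum Ecl_def)
  have "ind n (\<lambda>t. A t - Ecl j t) < 2 * int k"
  proof (rule minimal_U5_ind_diff_less[OF A])
    show "Ecl j \<in> H2 n" "Ecl j 0 < A 0"
      using j minimal_U5_D[OF A] by (simp_all add: H2_def Ecl_def)
    show "Ecl j \<noteq> (\<lambda>_. 0)" by (auto simp: fun_eq_iff Ecl_def)
    show "\<forall>x\<in>reduced_cone_c1pos n. 0 \<le> omega n x (Ecl j)"
      using reduced_cone_pos j
      by (auto simp: reduced_cone_c1pos_def area less_imp_le)
  qed
  then show ?thesis unfolding ind_diff E_sums(1,2) using j by (simp add: Ecl_def)
qed

lemma minimal_U5_ind_diff_E_E:
  assumes A: "A \<in> minimal_U5 n k" and ij: "1 \<le> i" "i < j" "j \<le> n"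
  shows "ind n A + 2 * A i - 2 * A j - 2 < 2 * int k"
proof -
  define v :: "nat \<Rightarrow> int" where "v t = (if t = i then 1 else if t = j then -1 else 0)" for t
  have "(v t)^2 + v t = (if t = i then 2 else 0)"
    "A t * v t = (if t = i then A t else 0) - (if t = j then A t else 0)"
    "x t * of_int (v t) = (if t = i then x t else 0) - (if t = j then x t else 0)"
    for t and x :: "nat \<Rightarrow> real"
    using ij by (simp_all add: v_def)
  then have v_sums: "(\<Sum>t=1..n. (v t)^2 + v t) = 2" "(\<Sum>t=1..n. A t * v t) = A i - A j"
    "(\<Sum>t=1..n. x t * of_int (v t)) = x i - x j" for x :: "nat \<Rightarrow> real"
    using ij by (simp_all add: sum_subtractf sum.delta)
  have area: "omega n x v = x i - x j" for x
    using ij v_sums(3) by (simp add: omega_eq_sum v_def)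
  have "ind n (\<lambda>t. A t - v t) < 2 * int k"
  proof (rule minimal_U5_ind_diff_less[OF A])
    show "v \<in> H2 n" "v 0 < A 0"
      using ij minimal_U5_D[OF A] by (simp_all add: v_def H2_def)
    show "v \<noteq> (\<lambda>_. 0)" by (auto simp: fun_eq_iff v_def)
    show "\<forall>x\<in>reduced_cone_c1pos n. 0 \<le> omega n x v"
      using reduced_cone_antimono ij by (auto simp: reduced_cone_c1pos_def area)
  qed
  then show ?thesis unfolding ind_diff v_sums(1,2) using ij by (simp add: v_def)
qed

lemma minimal_U5_ind_diff_H_E123:
  assumes A: "A \<in> minimal_U5 n k" and n: "1 \<le> n" and a0: "1 < A 0"
  shows "ind n A - 2 * (A 0 + A 1 + A 2 + A 3) - 2 < 2 * int k"
proof -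
  \<comment> \<open>For n < 3 the classes E_i with i > n are omitted from v.\<close>
  define v :: "nat \<Rightarrow> int"
    where "v t = (if t = 0 then 1 else if t \<le> min n 3 then -1 else 0)" for t
  have A_vanishes: "\<forall>t>n. A t = 0" using minimal_U5_D(1)[OF A] by (simp add: H2_def)
  have v_on: "v t = (if t \<le> 3 then -1 else 0)" if "t \<in> {1..n}" for t
    using that by (simp add: v_def)
  have "(\<Sum>t=1..n. (v t)^2 + v t) = 0"
    "(\<Sum>t=1..n. A t * v t) = - (\<Sum>t=1..n. if t \<le> 3 then A t else 0)"
    "(\<Sum>t=1..n. x t * of_int (v t)) = - (\<Sum>t=1..n. if t \<le> 3 then x t else 0)"
    for x :: "nat \<Rightarrow> real"
    by (simp_all add: v_on if_distrib sum_negf[symmetric] cong: if_cong)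
  then have v_sums: "(\<Sum>t=1..n. (v t)^2 + v t) = 0" "(\<Sum>t=1..n. A t * v t) = - (A 1 + A 2 + A 3)"
    "(\<Sum>t=1..n. x t * of_int (v t)) = - (\<Sum>t=1..min n 3. x t)" for x :: "nat \<Rightarrow> real"
    unfolding sum_if_le_eq_sum_upto_min sum_upto_min3_eq[OF n A_vanishes] by simp_all
  have area: "omega n x v = x 0 - (\<Sum>t=1..min n 3. x t)" for x
    unfolding omega_eq_sum v_sums(3) by (simp add: v_def)
  have "ind n (\<lambda>t. A t - v t) < 2 * int k"
  proof (rule minimal_U5_ind_diff_less[OF A])
    show "v \<in> H2 n" "v 0 < A 0" "v \<noteq> (\<lambda>_. 0)"
      using a0 by (auto simp: v_def H2_def fun_eq_iff)
    show "\<forall>x\<in>reduced_cone_c1pos n. 0 \<le> omega n x v"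
      using reduced_cone_sum_first_three_le n by (auto simp: reduced_cone_c1pos_def area)
  qed
  then show ?thesis unfolding ind_diff v_sums(1,2) by (simp add: v_def)
qed

lemma minimal_U5_ind_diff_c1:
  assumes A: "A \<in> minimal_U5 n k" and a0: "3 < A 0"
  shows "ind n A - 6 * A 0 - 2 * (\<Sum>t=1..n. A t) < 2 * int k"
proof -
  have c1_sums: "(\<Sum>t=1..n. (c1cl n t)^2 + c1cl n t) = 0"
    "(\<Sum>t=1..n. A t * c1cl n t) = - (\<Sum>t=1..n. A t)"
    by (simp_all add: c1cl_def sum_negf)
  have "ind n (\<lambda>t. A t - c1cl n t) < 2 * int k"
  proof (rule minimal_U5_ind_diff_less[OF A])
    show "c1cl n \<in> H2 n" "c1cl n 0 < A 0" "c1cl n \<noteq> (\<lambda>_. 0)"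
      using a0 by (auto simp: c1cl_def H2_def fun_eq_iff)
    show "\<forall>x\<in>reduced_cone_c1pos n. 0 \<le> omega n x (c1cl n)"
      by (auto simp: reduced_cone_c1pos_def)
  qed
  then show ?thesis unfolding ind_diff c1_sums by (simp add: c1cl_def)
qed

lemma minimal_U5_E_coeff_nonpos:
  assumes A: "A \<in> minimal_U5 n k" and "1 \<le> j" "j \<le> n"
  shows "A j \<le> 0"
  using minimal_U5_ind_diff_E[OF assms] minimal_U5_D(3)[OF A] by linarith

lemma minimal_U5_E_coeff_mono:
  assumes A: "A \<in> minimal_U5 n k" and "1 \<le> i" "i \<le> j" "j \<le> n"
  shows "A i \<le> A j"
proof (cases "i = j")
  case False
  then show ?thesis
    using minimal_U5_ind_diff_E_E[of A n k i j] assms minimal_U5_D(3)[OF A] by linarith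
qed simp

lemma sum_first_two:
  fixes f :: "nat \<Rightarrow> 'a::comm_monoid_add"
  assumes "2 \<le> n"
  shows "(\<Sum>i=1..n. f i) = f 1 + f 2 + (\<Sum>i=3..n. f i)"
  using assms
  by (simp add: sum.atLeast_Suc_atMost numeral_2_eq_2 numeral_3_eq_3 add.assoc)

lemma sum_sq_le_of_tail_le_third:
  fixes b :: "nat \<Rightarrow> int"
  assumes "3 \<le> n" and tail: "\<And>i. i \<in> {3..n} \<Longrightarrow> 0 \<le> b i \<and> b i \<le> b 3"
  shows "(\<Sum>i=1..n. (b i)^2) \<le> (b 1)^2 + (b 2)^2 + b 3 * ((\<Sum>i=1..n. b i) - b 1 - b 2)"
proof -
  have "(\<Sum>i=3..n. (b i)^2) \<le> (\<Sum>i=3..n. b 3 * b i)"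
    by (rule sum_mono) (use tail in \<open>auto simp: power2_eq_square intro: mult_right_mono\<close>)
  moreover have "2 \<le> n" using assms(1) by simp
  ultimately show ?thesis
    unfolding sum_first_two[OF \<open>2 \<le> n\<close>] by (simp add: sum_distrib_left)
qed

lemma sum_sq_plus_self_le_of_tail_le_1:
  fixes b :: "nat \<Rightarrow> int"
  assumes tail: "\<And>i. i \<in> {3..n} \<Longrightarrow> 0 \<le> b i \<and> b i \<le> 1"
  shows "(\<Sum>i=1..n. (b i)^2 + b i) \<le> (b 1)^2 + b 1 + (b 2)^2 + b 2 + 2 * int n"
proof -
  have nonneg: "0 \<le> (b i)^2 + b i" for i
    using sq_minus_self_nonneg[of "- b i"] by simp
  show ?thesis
  proof (cases "2 \<le> n")
    case True
    have "(\<Sum>i=3..n. (b i)^2 + b i) \<le> (\<Sum>i=3..n. 2)"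
    proof (rule sum_mono)
      fix i assume "i \<in> {3..n}"
      then have "b i = 0 \<or> b i = 1" using tail by fastforce
      then show "(b i)^2 + b i \<le> 2" by auto
    qed
    also have "\<dots> \<le> 2 * int n" by simp
    finally show ?thesis unfolding sum_first_two[OF True] by simp
  next
    case False
    then consider "n = 0" | "n = 1" by linarith
    then show ?thesis using nonneg[of 1] nonneg[of 2] by cases auto
  qed
qed

text \<open>In the next two bounds u, v, w stand for b_1, b_2, b_3 and S, Q, T for \<Sum>b_i, \<Sum>b_i^2,
  \<Sum>(b_i^2 + b_i).\<close>

lemma bound_of_third_ge_2:
  fixes a u v w S Q k :: int
  assumes "w \<le> v" "v \<le> u" "2 \<le> w" "u + v + w \<le> a" "S < 3 * a"
    and ind: "a^2 - Q < 3 * a - S + 2 * k"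
    and Q: "Q \<le> u^2 + v^2 + w * (S - u - v)"
  shows "a \<le> 8 * k^2 + 6 * k"
proof -
  define e where "e = a - u - v - w"
  define c where "c = 3 * a - S"
  have a: "a = u + v + w + e" and S: "S = 3 * a - c" by (simp_all add: e_def c_def)
  have "a^2 - u^2 - v^2 - w * (S - u - v) < c + 2 * k" using ind Q by (simp add: c_def)
  moreover have "a^2 - u^2 - v^2 - w * (S - u - v)
      = 2 * (u * v - w^2) + e * (2 * u + 2 * v - w) + e^2 + c * w"
    unfolding S a by (simp add: algebra_simps power2_eq_square)
  ultimately have key: "2 * (u * v - w^2) + e * (2 * u + 2 * v - w) + e^2 + c * (w - 1) < 2 * k"
    by (simp add: algebra_simps)
  have "w * w \<le> u * v" using assms by (intro mult_mono) auto
  moreover have "0 \<le> e * (2 * u + 2 * v - w)" using assms by (simp add: e_def)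
  moreover have "w - 1 \<le> c * (w - 1)"
  proof -
    have "0 \<le> (c - 1) * (w - 1)" using assms by (simp add: c_def)
    then show ?thesis by (simp add: algebra_simps)
  qed
  moreover have e: "0 \<le> e" "e \<le> e^2"
    using assms sq_minus_self_nonneg[of e] by (simp_all add: e_def)
  ultimately have w: "w \<le> 2 * k" and "e \<le> 2 * k" and "u * v < k + w^2"
    using key assms unfolding power2_eq_square by (smt (verit))+
  moreover have "w^2 \<le> 4 * k^2"
    using power_mono[OF w, of 2] assms by (simp add: power_mult_distrib)
  moreover have "u \<le> u * v" using assms by simp
  ultimately show ?thesis using a assms by linarith
qed

lemma bound_of_third_le_1:
  fixes a u v w T n k :: int
  assumes "0 \<le> u" "0 \<le> v" "0 \<le> w" "w \<le> 1" "u + v + w \<le> a" "0 \<le> n" "0 \<le> k"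
    and T: "T \<le> u^2 + u + v^2 + v + 2 * n"
    and ind: "a^2 + 3 * a - T - 2 * k < 2 * (a - u - v - w) + 2"
  shows "a \<le> 3 * n + 3 * k + 2"
proof -
  define e where "e = a - u - v - w"
  have a: "a = u + v + w + e" and e: "0 \<le> e" "e \<le> e^2"
    using assms sq_minus_self_nonneg[of e] by (simp_all add: e_def)
  have "a^2 = (u + v + e)^2 + w * (2 * (u + v + e) + w)"
    unfolding a by (simp add: algebra_simps power2_eq_square)
  moreover have "(u + v + e)^2 = u^2 + v^2 + e^2 + 2 * (u * v) + 2 * (e * (u + v))"
    by (simp add: algebra_simps power2_eq_square)
  moreover have "0 \<le> w * (2 * (u + v + e) + w)" "0 \<le> u * v" "0 \<le> e * (u + v)"
    using assms e by simp_all
  ultimately have "2 * (u + v) + e^2 + e < 2 * n + 2 * k + 2"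
    using T ind a assms by (smt (verit))
  then show ?thesis using a e assms by (smt (verit))
qed

lemma minimal_U5_H_coeff_bound:
  assumes A: "A \<in> minimal_U5 n k" and n: "1 \<le> n"
  shows "A 0 \<le> 8 * (int k)^2 + 9 * int k + 3 * int n + 4"
proof (cases "A 0 \<le> 3")
  case True
  then show ?thesis using zero_le_power2[of "int k"] by linarith
next
  case False
  define b where "b i = - A i" for i
  have ind_A: "2 * int k \<le> ind n A" using minimal_U5_D(3)[OF A] .
  have b_vanishes: "b i = 0" if "n < i" for i
    using minimal_U5_D(1)[OF A] that by (simp add: b_def H2_def)
  have b_nonneg: "0 \<le> b i" if "1 \<le> i" for i
    using minimal_U5_E_coeff_nonpos[OF A that] b_vanishes[of i] by (cases "i \<le> n") (simp_all add: b_def)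
  have b_antimono: "b j \<le> b i" if "1 \<le> i" "i \<le> j" for i j
  proof (cases "j \<le> n")
    case True
    then show ?thesis using minimal_U5_E_coeff_mono[OF A that] by (simp add: b_def)
  next
    case False
    then show ?thesis using b_vanishes[of j] b_nonneg[of i] that by simp
  qed
  have ind_b: "ind n A = (A 0)^2 + 3 * A 0 - (\<Sum>i=1..n. (b i)^2 + b i)"
    by (simp add: ind_eq_sum b_def)
  have b123_le: "b 1 + b 2 + b 3 \<le> A 0"
    and H_E123: "ind n A - 2 * (A 0 - b 1 - b 2 - b 3) - 2 < 2 * int k"
    using minimal_U5_ind_diff_H_E123[OF A n] False ind_A by (simp_all add: b_def)
  have c1: "ind n A - 6 * A 0 + 2 * (\<Sum>i=1..n. b i) < 2 * int k"
    using minimal_U5_ind_diff_c1[OF A] False by (simp add: b_def sum_negf)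
  consider "2 \<le> b 3" | "b 3 \<le> 1" by linarith
  then show ?thesis
  proof cases
    case 1
    define Q where "Q = (\<Sum>i=1..n. (b i)^2)"
    define S where "S = (\<Sum>i=1..n. b i)"
    have "3 \<le> n" using 1 b_vanishes[of 3] by fastforce
    moreover have "0 \<le> b i \<and> b i \<le> b 3" if "i \<in> {3..n}" for i
      using that b_nonneg[of i] b_antimono[of 3 i] by simp
    ultimately have Q_le: "Q \<le> (b 1)^2 + (b 2)^2 + b 3 * (S - b 1 - b 2)"
      unfolding Q_def S_def by (rule sum_sq_le_of_tail_le_third)
    have ind_QS: "ind n A = (A 0)^2 + 3 * A 0 - Q - S"
      using ind_b by (simp add: Q_def S_def sum.distrib)
    have "A 0 \<le> 8 * (int k)^2 + 6 * int k"
    proof (rule bound_of_third_ge_2[OF _ _ 1 b123_le _ _ Q_le])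
      show "b 3 \<le> b 2" "b 2 \<le> b 1" using b_antimono by simp_all
      show "S < 3 * A 0" "(A 0)^2 - Q < 3 * A 0 - S + 2 * int k"
        using c1 ind_A ind_QS unfolding S_def[symmetric] by linarith+
    qed
    then show ?thesis by linarith
  next
    case 2
    then have "0 \<le> b i \<and> b i \<le> 1" if "i \<in> {3..n}" for i
      using that b_nonneg[of i] b_antimono[of 3 i] by simp
    then have T_le: "(\<Sum>i=1..n. (b i)^2 + b i) \<le> (b 1)^2 + b 1 + (b 2)^2 + b 2 + 2 * int n"
      by (rule sum_sq_plus_self_le_of_tail_le_1)
    have "A 0 \<le> 3 * int n + 3 * int k + 2"
    proof (rule bound_of_third_le_1[OF _ _ _ 2 b123_le _ _ T_le])
      show "0 \<le> b 1" "0 \<le> b 2" "0 \<le> b 3" using b_nonneg by simp_all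
      show "(A 0)^2 + 3 * A 0 - (\<Sum>i=1..n. (b i)^2 + b i) - 2 * int k
          < 2 * (A 0 - b 1 - b 2 - b 3) + 2"
        using H_E123 unfolding ind_b by linarith
    qed simp_all
    then show ?thesis using zero_le_power2[of "int k"] by linarith
  qed
qed

lemma minimal_U5_E_coeff_bound:
  assumes A: "A \<in> minimal_U5 n k" and i: "1 \<le> i" "i \<le> n"
  shows "- (A 0 + 2) < A i \<and> A i \<le> 0"
proof -
  have "(A i)^2 - A i \<le> (\<Sum>i=1..n. (A i)^2 - A i)"
    by (rule member_le_sum) (use i sq_minus_self_nonneg in auto)
  then have "(A i)^2 - A i \<le> (A 0)^2 + 3 * A 0"
    using minimal_U5_D(3)[OF A] by (simp add: ind_eq_sum)
  moreover have "(A 0 + 2)^2 \<le> (A i)^2" if "A i \<le> - (A 0 + 2)"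
    using that minimal_U5_D(2)[OF A] power_mono[of "A 0 + 2" "- A i" 2] by simp
  moreover have "(A 0 + 2)^2 = (A 0)^2 + 4 * A 0 + 4" by algebra
  ultimately have "- (A 0 + 2) < A i" using minimal_U5_D(2)[OF A] by linarith
  then show ?thesis using minimal_U5_E_coeff_nonpos[OF A i] by simp
qed

theorem proposition4p6:
  fixes n k :: nat
  assumes "n \<ge> 1" and "k \<ge> 1"
  shows "finite (minimal_U5 n k)"
proof -
  define M :: int where "M = 8 * (int k)^2 + 9 * int k + 3 * int n + 6"
  let ?boxed = "{f. \<forall>i. (i \<in> {0..n} \<longrightarrow> f i \<in> {-M..M}) \<and> (i \<notin> {0..n} \<longrightarrow> f i = 0)}"
  have "A \<in> ?boxed" if A: "A \<in> minimal_U5 n k" for A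
  proof -
    have "A i \<in> {-M..M}" if "i \<in> {0..n}" for i
      using that minimal_U5_D(2)[OF A] minimal_U5_H_coeff_bound[OF A assms(1)]
        minimal_U5_E_coeff_bound[OF A, of i] zero_le_power2[of "int k"]
      by (cases "i = 0") (auto simp: M_def)
    moreover have "A i = 0" if "i \<notin> {0..n}" for i
      using minimal_U5_D(1)[OF A] that by (simp add: H2_def)
    ultimately show ?thesis by blast
  qed
  moreover have "finite ?boxed" by (rule finite_set_of_finite_funs) auto
  ultimately show ?thesis by (meson finite_subset subsetI)
qed

end
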